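(* Let $X\in\mathbb{R}^{n\times p}$ have unit $\ell_2$-norm columns and worst-case coherence $\mu>0$, let $\beta\in\mathbb{R}^p$ be $k$-sparse with support $\mathcal{S}$, let $\eta\in\mathbb{R}^n$ have independent $\mathcal{N}(0,\sigma^2)$ entries, and $y=X\beta+\eta$. Suppose $p\ge2n$, $k<\mu^{-1}$, and $$\frac{\beta_{\min}}{\|\beta\|_2}>2c_1\mu\sqrt{k}+4c_2\frac{\sqrt{\sigma^2\log p}}{\|\beta\|_2}$$ for some constants $c_1,c_2>2$. Then, with probability exceeding $1-2\big(p\sqrt{2\pi\log p}\big)^{-1}$, the output $\hat{\mathcal{S}}$ of Algorithm 1 satisfies $\mathcal{S}\subset\hat{\mathcal{S}}$ for every integer $d$ with $\lceil\sqrt{n}\rceil\le d\le p$.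
   Context: Worst-case coherence of $X$ with unit-norm columns $X_1,\dots,X_p$: $\mu=\max_{i\ne j}|X_i^\top X_j|$. $[[p]]=\{1,\dots,p\}$, $k<n$, $\sigma>0$. $\beta$ (deterministic) is $k$-sparse with support $\mathcal{S}=\{i:\beta_i\ne0\}$, $|\mathcal{S}|=k$; $\beta_{\min}=\min_{i\in\mathcal{S}}|\beta_i|$. Algorithm 1: given $X$, $y$ and an integer $d\in\{1,\dots,p\}$, compute $w=X^\top y$ and output $\hat{\mathcal{S}}\subset[[p]]$ with $|\hat{\mathcal{S}}|=d$ such that $|w_i|\ge|w_j|$ for all $i\in\hat{\mathcal{S}}$, $j\notin\hat{\mathcal{S}}$ (ties broken arbitrarily). *)

theory Defs
  imports "HOL-Probability.Probability"
begin

definition coherence :: "real ^ 'p ^ 'n \<Rightarrow> real" where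
  "coherence X = Max {\<bar>column i X \<bullet> column j X\<bar> | i j. i \<noteq> j}"

definition supp_vec :: "real ^ 'p \<Rightarrow> 'p set" where
  "supp_vec \<beta> = {i. \<beta> $ i \<noteq> 0}"

definition beta_min :: "real ^ 'p \<Rightarrow> real" where
  "beta_min \<beta> = Min {\<bar>\<beta> $ i\<bar> | i. i \<in> supp_vec \<beta>}"

text \<open>Algorithm 1: S is a legitimate output of the algorithm on input (X, y, d):
  w = X^T y, and S consists of d indices of largest |w_i| (ties broken arbitrarily).\<close>
definition alg1_output :: "real ^ 'p ^ 'n \<Rightarrow> real ^ 'n \<Rightarrow> nat \<Rightarrow> 'p set \<Rightarrow> bool" where
  "alg1_output X y d S \<longleftrightarrow>
     (let w = transpose X *v y in
       card S = d \<and> (\<forall>i\<in>S. \<forall>j. j \<notin> S \<longrightarrow> \<bar>w $ i\<bar> \<ge> \<bar>w $ j\<bar>))"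

end

theory Submission
  imports Defs "HOL-Real_Asymp.Real_Asymp"
begin

text \<open>
  Write \<open>w = X\<^sup>T y = X\<^sup>T X \<beta> + X\<^sup>T \<eta>\<close>. Since the columns have unit norm, every entry of
  \<open>X\<^sup>T X \<beta>\<close> differs from the corresponding entry of \<open>\<beta>\<close> by at most \<open>\<mu> \<parallel>\<beta>\<parallel>\<^sub>1 \<le> \<mu> \<surd>k \<parallel>\<beta>\<parallel>\<^sub>2\<close>,
  and each \<open>X\<^sub>i\<^sup>T \<eta>\<close> is \<open>\<N>(0, \<sigma>\<^sup>2)\<close>, so by the Gaussian tail bound and a union bound all of them
  are at most \<open>2 \<sigma> \<surd>(log p)\<close> except with probability \<open>(p \<surd>(2 \<pi> log p))\<^sup>-\<^sup>1\<close>. On that event the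
  hypothesis on \<open>\<beta>\<^sub>m\<^sub>i\<^sub>n\<close> makes every \<open>|w\<^sub>i|\<close>, \<open>i \<in> \<S>\<close>, strictly larger than every \<open>|w\<^sub>j|\<close>,
  \<open>j \<notin> \<S>\<close>, so any \<open>d \<ge> k\<close> largest entries contain \<open>\<S>\<close>. Finally \<open>k \<le> \<lceil>\<surd>n\<rceil>\<close>: the
  hypothesis gives \<open>4 c\<^sub>1\<^sup>2 \<mu>\<^sup>2 k\<^sup>2 < 1\<close>, while the Welch bound gives \<open>2 n \<mu>\<^sup>2 \<ge> 1\<close> when \<open>p \<ge> 2n\<close>.
\<close>

lemma nn_integral_normal_density_greaterThan_le:
  assumes \<sigma>: "\<sigma> > 0" and t: "t > 0"
  shows "(\<integral>\<^sup>+x. ennreal (normal_density 0 \<sigma> x) * indicator {t<..} x \<partial>lborel)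
          \<le> ennreal (\<sigma>\<^sup>2 * normal_density 0 \<sigma> t / t)"
proof -
  \<comment> \<open>Mills' ratio: \<open>x/t \<ge> 1\<close> on the tail, and \<open>x \<phi>(x)\<close> has the antiderivative \<open>-\<sigma>\<^sup>2 \<phi>(x)\<close>.\<close>
  define F where "F x = - (\<sigma>\<^sup>2 * normal_density 0 \<sigma> x / t)" for x
  have F_deriv: "DERIV F x :> x / t * normal_density 0 \<sigma> x" for x
    unfolding F_def normal_density_def using \<sigma> t
    by (auto intro!: derivative_eq_intros simp: field_simps power2_eq_square)
  have F_lim: "(F \<longlongrightarrow> 0) at_top"
    unfolding F_def normal_density_def using \<sigma> t by real_asymp
  have "(\<integral>\<^sup>+x. ennreal (normal_density 0 \<sigma> x) * indicator {t<..} x \<partial>lborel)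
     \<le> (\<integral>\<^sup>+x. ennreal (x / t * normal_density 0 \<sigma> x) * indicator {t..} x \<partial>lborel)"
  proof (intro nn_integral_mono)
    fix x :: real
    show "ennreal (normal_density 0 \<sigma> x) * indicator {t<..} x
        \<le> ennreal (x / t * normal_density 0 \<sigma> x) * indicator {t..} x"
    proof (cases "t < x")
      case True
      then have "1 * normal_density 0 \<sigma> x \<le> x / t * normal_density 0 \<sigma> x"
        using t by (intro mult_right_mono) auto
      then show ?thesis using True by (auto intro!: ennreal_leI)
    qed (auto split: split_indicator)
  qed
  also have "\<dots> = ennreal (0 - F t)"
    by (rule nn_integral_FTC_atLeast) (use F_deriv F_lim t in auto)
  finally show ?thesis by (simp add: F_def)
qed

lemma (in prob_space) prob_abs_normal_greater_le:
  assumes Y: "distributed M lborel Y (normal_density 0 s)" and s: "s > 0" and t: "t > 0"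
  shows "measure M {\<omega> \<in> space M. \<bar>Y \<omega>\<bar> > t} \<le> 2 * (s\<^sup>2 * normal_density 0 s t / t)"
proof -
  let ?c = "s\<^sup>2 * normal_density 0 s t / t"
  have upper: "measure M (Z -` {t<..} \<inter> space M) \<le> ?c"
    if Z: "distributed M lborel Z (normal_density 0 s)" for Z
  proof -
    have "emeasure M (Z -` {t<..} \<inter> space M)
        = (\<integral>\<^sup>+x. ennreal (normal_density 0 s x) * indicator {t<..} x \<partial>lborel)"
      by (rule distributed_emeasure[OF Z]) simp
    also have "\<dots> \<le> ennreal ?c" by (rule nn_integral_normal_density_greaterThan_le[OF s t])
    finally show ?thesis using s t by (simp add: emeasure_eq_measure ennreal_le_iff)
  qed
  have "distributed M lborel (\<lambda>x. 0 + (-1) * Y x) (normal_density (0 + (-1) * 0) (\<bar>-1\<bar> * s))"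
    by (rule normal_density_affine[OF Y s]) simp
  then have minus_Y: "distributed M lborel (\<lambda>x. - Y x) (normal_density 0 s)" by simp
  have [measurable]: "Y \<in> borel_measurable M" using distributed_measurable[OF Y] by simp
  have "{\<omega> \<in> space M. \<bar>Y \<omega>\<bar> > t}
      = (Y -` {t<..} \<inter> space M) \<union> ((\<lambda>x. - Y x) -` {t<..} \<inter> space M)"
    by (auto simp: abs_if)
  then have "measure M {\<omega> \<in> space M. \<bar>Y \<omega>\<bar> > t}
      \<le> measure M (Y -` {t<..} \<inter> space M) + measure M ((\<lambda>x. - Y x) -` {t<..} \<inter> space M)"
    by (simp add: measure_Un_le)
  also have "\<dots> \<le> ?c + ?c" using upper[OF Y] upper[OF minus_Y] by (rule add_mono)
  finally show ?thesis by (simp add: mult_ac)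
qed

lemma (in prob_space) distributed_inner_indep_normal:
  fixes \<eta> :: "'a \<Rightarrow> real ^ 'n" and a :: "real ^ 'n"
  assumes indep: "indep_vars (\<lambda>_. borel) (\<lambda>r \<omega>. \<eta> \<omega> $ r) UNIV"
    and normal: "\<forall>r. distributed M lborel (\<lambda>\<omega>. \<eta> \<omega> $ r) (normal_density 0 \<sigma>)"
    and \<sigma>: "\<sigma> > 0" and a: "norm a = 1"
  shows "distributed M lborel (\<lambda>\<omega>. a \<bullet> \<eta> \<omega>) (normal_density 0 \<sigma>)"
proof -
  \<comment> \<open>Restrict to the nonzero coordinates of \<open>a\<close>, since \<open>sum_indep_normal\<close> needs positive variances.\<close>
  define I where "I = {r. a $ r \<noteq> 0}"
  have "I \<noteq> {}"
  proof
    assume "I = {}"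
    then have "a = 0" by (auto simp: I_def vec_eq_iff)
    with a show False by simp
  qed
  moreover have "indep_vars (\<lambda>_. borel) (\<lambda>r \<omega>. a $ r * \<eta> \<omega> $ r) I"
    using indep_vars_compose2[OF indep, where Y="\<lambda>r x. a $ r * x" and N="\<lambda>_. borel"]
    by (auto intro: indep_vars_subset)
  moreover have "distributed M lborel (\<lambda>\<omega>. a $ r * \<eta> \<omega> $ r) (normal_density 0 (\<bar>a $ r\<bar> * \<sigma>))"
    if "r \<in> I" for r
    using normal_density_affine[of "\<lambda>\<omega>. \<eta> \<omega> $ r" 0 \<sigma> "a $ r" 0] normal \<sigma> that
    by (simp add: I_def)
  ultimately have "distributed M lborel (\<lambda>\<omega>. \<Sum>r\<in>I. a $ r * \<eta> \<omega> $ r)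
     (normal_density (\<Sum>r\<in>I. 0) (sqrt (\<Sum>r\<in>I. (\<bar>a $ r\<bar> * \<sigma>)\<^sup>2)))"
    using \<sigma> by (intro sum_indep_normal) (auto simp: I_def)
  moreover have "(\<Sum>r\<in>I. (\<bar>a $ r\<bar> * \<sigma>)\<^sup>2) = \<sigma>\<^sup>2 * (norm a)\<^sup>2"
  proof -
    have "(\<Sum>r\<in>I. (\<bar>a $ r\<bar> * \<sigma>)\<^sup>2) = \<sigma>\<^sup>2 * (\<Sum>r\<in>UNIV. (a $ r)\<^sup>2)"
      by (subst sum.mono_neutral_left[of UNIV I])
         (auto simp: I_def power_mult_distrib sum_distrib_left mult.commute)
    then show ?thesis by (simp add: norm_vec_def L2_set_def sum_nonneg)
  qed
  moreover have "a \<bullet> \<eta> \<omega> = (\<Sum>r\<in>I. a $ r * \<eta> \<omega> $ r)" for \<omega>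
    unfolding inner_vec_def inner_real_def by (rule sum.mono_neutral_right) (auto simp: I_def)
  ultimately show ?thesis using a \<sigma> by simp
qed

lemma transpose_mult_vec_nth: "(transpose X *v v) $ i = column i X \<bullet> (v :: real ^ 'n)"
  by (simp add: matrix_vector_mult_def transpose_def column_def inner_vec_def mult.commute)

lemma inner_column_mult_vec:
  fixes X :: "real ^ 'p ^ 'n"
  shows "column i X \<bullet> (X *v b) = (\<Sum>j\<in>UNIV. b $ j * (column i X \<bullet> column j X))"
  by (simp add: matrix_vector_mult_def column_def inner_vec_def sum_distrib_left mult_ac)
     (rule sum.swap)

lemma inner_column_self: "norm (column i X) = 1 \<Longrightarrow> column i X \<bullet> column i X = (1::real)"
  by (metis power2_norm_eq_inner power_one)

lemma abs_inner_columns_le_coherence: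
  fixes X :: "real ^ 'p ^ 'n"
  assumes "i \<noteq> j"
  shows "\<bar>column i X \<bullet> column j X\<bar> \<le> coherence X"
proof -
  have "finite {\<bar>column i X \<bullet> column j X\<bar> | i j. i \<noteq> j}"
    by (rule finite_subset[of _ "(\<lambda>(i,j). \<bar>column i X \<bullet> column j X\<bar>) ` UNIV"]) auto
  then show ?thesis unfolding coherence_def
    by (rule Max_ge) (use assms in blast)
qed

lemma sum_sq_inner_columns_eq_sum_sq_inner_rows:
  fixes X :: "real ^ 'p ^ 'n"
  shows "(\<Sum>i\<in>UNIV. \<Sum>j\<in>UNIV. (column i X \<bullet> column j X)\<^sup>2)
       = (\<Sum>r\<in>UNIV. \<Sum>s\<in>UNIV. (row r X \<bullet> row s X)\<^sup>2)"
proof -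
  have "(\<Sum>i\<in>UNIV. \<Sum>j\<in>UNIV. (column i X \<bullet> column j X)\<^sup>2)
      = (\<Sum>i\<in>UNIV. \<Sum>j\<in>UNIV. \<Sum>r\<in>UNIV. \<Sum>s\<in>UNIV. X$r$i * X$r$j * (X$s$i * X$s$j))"
    by (simp add: column_def inner_vec_def power2_eq_square sum_product)
  also have "\<dots> = (\<Sum>r\<in>UNIV. \<Sum>s\<in>UNIV. \<Sum>i\<in>UNIV. \<Sum>j\<in>UNIV. X$r$i * X$r$j * (X$s$i * X$s$j))"
    by (simp only: sum.swap[of _ "UNIV :: 'p set" "UNIV :: 'n set"])
  also have "\<dots> = (\<Sum>r\<in>UNIV. \<Sum>s\<in>UNIV. (row r X \<bullet> row s X)\<^sup>2)"
    by (simp add: row_def inner_vec_def power2_eq_square sum_product mult_ac)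
  finally show ?thesis .
qed

text \<open>The Welch bound: \<open>p\<^sup>2 = (tr X X\<^sup>T)\<^sup>2 \<le> n \<parallel>X X\<^sup>T\<parallel>\<^sub>F\<^sup>2 = n \<parallel>X\<^sup>T X\<parallel>\<^sub>F\<^sup>2 \<le> n p (1 + (p - 1) \<mu>\<^sup>2)\<close>.\<close>

lemma welch_bound:
  fixes X :: "real ^ 'p ^ 'n"
  assumes unit: "\<forall>i. norm (column i X) = 1"
  shows "real CARD('p) \<le> real CARD('n) * (1 + (real CARD('p) - 1) * (coherence X)\<^sup>2)"
proof -
  define p where "p = real CARD('p)"
  define n where "n = real CARD('n)"
  define \<mu> where "\<mu> = coherence X"
  have trace: "(\<Sum>r\<in>UNIV. row r X \<bullet> row r X) = p"
  proof -
    have "(\<Sum>r\<in>UNIV. row r X \<bullet> row r X) = (\<Sum>i\<in>UNIV. column i X \<bullet> column i X)"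
      by (simp add: row_def column_def inner_vec_def) (rule sum.swap)
    then show ?thesis using unit by (simp add: inner_column_self p_def)
  qed
  have gram_row: "(\<Sum>j\<in>UNIV. (column i X \<bullet> column j X)\<^sup>2) \<le> 1 + (p - 1) * \<mu>\<^sup>2" for i
  proof -
    have "(\<Sum>j\<in>UNIV - {i}. (column i X \<bullet> column j X)\<^sup>2) \<le> (\<Sum>j\<in>UNIV - {i}. \<mu>\<^sup>2)"
    proof (rule sum_mono)
      fix j assume "j \<in> UNIV - {i}"
      then have "\<bar>column i X \<bullet> column j X\<bar> \<le> \<mu>"
        by (auto simp: \<mu>_def abs_inner_columns_le_coherence)
      then show "(column i X \<bullet> column j X)\<^sup>2 \<le> \<mu>\<^sup>2"
        by (metis abs_ge_zero order_trans power2_abs power_mono)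
    qed
    then show ?thesis
      using unit by (simp add: sum.remove[of UNIV i] inner_column_self p_def card_Diff_singleton of_nat_diff)
  qed
  have "p\<^sup>2 \<le> n * (\<Sum>r\<in>UNIV. (row r X \<bullet> row r X)\<^sup>2)"
    using Cauchy_Schwarz_ineq_sum[of "\<lambda>r. row r X \<bullet> row r X" "\<lambda>_. 1" UNIV]
    by (simp add: trace n_def mult.commute)
  also have "\<dots> \<le> n * (\<Sum>r\<in>UNIV. \<Sum>s\<in>UNIV. (row r X \<bullet> row s X)\<^sup>2)"
    by (intro mult_left_mono sum_mono member_le_sum) (auto simp: n_def)
  also have "\<dots> \<le> n * (p * (1 + (p - 1) * \<mu>\<^sup>2))"
    using sum_mono[OF gram_row, where K=UNIV]
    by (intro mult_left_mono) (auto simp: sum_sq_inner_columns_eq_sum_sq_inner_rows[symmetric] n_def p_def)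
  finally have "p * p \<le> p * (n * (1 + (p - 1) * \<mu>\<^sup>2))"
    by (simp add: power2_eq_square mult_ac)
  moreover have "p > 0" by (simp add: p_def)
  ultimately show ?thesis by (simp add: p_def n_def \<mu>_def)
qed

lemma coherence_sq_ge:
  fixes X :: "real ^ 'p ^ 'n"
  assumes unit: "\<forall>i. norm (column i X) = 1" and p: "CARD('p) \<ge> 2 * CARD('n)"
  shows "2 * real CARD('n) * (coherence X)\<^sup>2 \<ge> 1"
proof (rule ccontr)
  define p where "p = real CARD('p)"
  define n where "n = real CARD('n)"
  assume "\<not> ?thesis"
  then have small: "2 * (n * (coherence X)\<^sup>2) < 1" by (simp add: n_def)
  have "CARD('n) > 0" by (rule finite_UNIV_card_ge_0) simp
  with p have "CARD('p) > 1" by linarith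
  define z where "z = (p - 1) * (n * (coherence X)\<^sup>2)"
  have "(p - 1) * (2 * (n * (coherence X)\<^sup>2)) < (p - 1) * 1"
    using small \<open>CARD('p) > 1\<close> by (intro mult_strict_left_mono) (auto simp: p_def)
  then have "2 * z < p - 1" by (simp add: z_def mult.left_commute)
  moreover have "p \<le> n + z"
    using welch_bound[OF unit] by (simp add: z_def p_def n_def algebra_simps)
  moreover have "p \<ge> 2 * n" using p by (simp add: p_def n_def)
  ultimately show False by linarith
qed

lemma finite_abs_supp_vec_entries: "finite {\<bar>\<beta> $ i\<bar> | i. i \<in> supp_vec \<beta>}"
  by (rule finite_subset[of _ "(\<lambda>i. \<bar>\<beta> $ i\<bar>) ` UNIV"]) auto

lemma beta_min_le_abs:
  assumes "i \<in> supp_vec \<beta>"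
  shows "beta_min \<beta> \<le> \<bar>\<beta> $ i\<bar>"
  unfolding beta_min_def by (rule Min_le[OF finite_abs_supp_vec_entries]) (use assms in blast)

lemma beta_min_nonneg:
  assumes "supp_vec \<beta> \<noteq> {}"
  shows "beta_min \<beta> \<ge> 0"
proof -
  have "beta_min \<beta> \<in> {\<bar>\<beta> $ i\<bar> | i. i \<in> supp_vec \<beta>}"
    unfolding beta_min_def by (rule Min_in[OF finite_abs_supp_vec_entries]) (use assms in blast)
  then show ?thesis by auto
qed

lemma norm_sq_eq_sum_supp_vec: "(norm \<beta>)\<^sup>2 = (\<Sum>l\<in>supp_vec \<beta>. (\<beta> $ l)\<^sup>2)"
proof -
  have "(norm \<beta>)\<^sup>2 = (\<Sum>l\<in>UNIV. (\<beta> $ l)\<^sup>2)"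
    by (simp add: norm_vec_def L2_set_def sum_nonneg)
  also have "\<dots> = (\<Sum>l\<in>supp_vec \<beta>. (\<beta> $ l)\<^sup>2)"
    by (rule sum.mono_neutral_right) (auto simp: supp_vec_def)
  finally show ?thesis .
qed

lemma sum_abs_le_sqrt_card_supp_vec_mult_norm:
  fixes \<beta> :: "real ^ 'p"
  shows "(\<Sum>l\<in>UNIV. \<bar>\<beta> $ l\<bar>) \<le> sqrt (real (card (supp_vec \<beta>))) * norm \<beta>"
proof (rule power2_le_imp_le)
  have "(\<Sum>l\<in>UNIV. \<bar>\<beta> $ l\<bar>) = (\<Sum>l\<in>supp_vec \<beta>. \<bar>\<beta> $ l\<bar> * 1)"
    unfolding mult_1_right by (rule sum.mono_neutral_right) (auto simp: supp_vec_def)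
  also have "\<dots>\<^sup>2 \<le> (\<Sum>l\<in>supp_vec \<beta>. \<bar>\<beta> $ l\<bar>\<^sup>2) * (\<Sum>l\<in>supp_vec \<beta>. 1\<^sup>2)"
    by (rule Cauchy_Schwarz_ineq_sum)
  also have "\<dots> = (sqrt (real (card (supp_vec \<beta>))) * norm \<beta>)\<^sup>2"
    by (simp add: norm_sq_eq_sum_supp_vec power_mult_distrib mult.commute)
  finally show "(\<Sum>l\<in>UNIV. \<bar>\<beta> $ l\<bar>)\<^sup>2 \<le> (sqrt (real (card (supp_vec \<beta>))) * norm \<beta>)\<^sup>2" .
qed simp

lemma beta_min_sq_mult_card_le:
  fixes \<beta> :: "real ^ 'p"
  assumes "supp_vec \<beta> \<noteq> {}"
  shows "(beta_min \<beta>)\<^sup>2 * real (card (supp_vec \<beta>)) \<le> (norm \<beta>)\<^sup>2"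
proof -
  have "(beta_min \<beta>)\<^sup>2 * real (card (supp_vec \<beta>)) = (\<Sum>l\<in>supp_vec \<beta>. (beta_min \<beta>)\<^sup>2)"
    by simp
  also have "\<dots> \<le> (\<Sum>l\<in>supp_vec \<beta>. \<bar>\<beta> $ l\<bar>\<^sup>2)"
    using beta_min_le_abs beta_min_nonneg[OF assms] by (intro sum_mono power_mono)
  finally show ?thesis by (simp add: norm_sq_eq_sum_supp_vec)
qed

lemma card_supp_vec_le_ceiling_sqrt:
  fixes \<beta> :: "real ^ 'p" and \<mu> c n :: real
  assumes welch: "2 * n * \<mu>\<^sup>2 \<ge> 1" and \<mu>: "\<mu> > 0" and c: "c > 2"
    and \<beta>: "beta_min \<beta> / norm \<beta> > 2 * c * \<mu> * sqrt (real (card (supp_vec \<beta>)))"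
  shows "card (supp_vec \<beta>) \<le> nat \<lceil>sqrt n\<rceil>"
proof (cases "supp_vec \<beta> = {}")
  case False
  define k where "k = real (card (supp_vec \<beta>))"
  define x where "x = beta_min \<beta> / norm \<beta>"
  have k: "k \<ge> 1" using False by (simp add: k_def Suc_le_eq card_gt_0_iff)
  have "norm \<beta> > 0" using False by (auto simp: supp_vec_def)
  then have "x\<^sup>2 * k \<le> 1"
    using beta_min_sq_mult_card_le[OF False] by (simp add: x_def k_def power_divide field_simps)
  moreover have "4 * c\<^sup>2 * \<mu>\<^sup>2 * k * k < x\<^sup>2 * k"
  proof -
    have "(2 * c * \<mu> * sqrt k)\<^sup>2 < x\<^sup>2"
      using \<beta> c \<mu> k by (intro power_strict_mono) (auto simp: x_def k_def)
    then have "4 * c\<^sup>2 * \<mu>\<^sup>2 * k < x\<^sup>2"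
      using k by (simp add: power_mult_distrib)
    then show ?thesis using k by (intro mult_strict_right_mono) auto
  qed
  ultimately have "4 * c\<^sup>2 * \<mu>\<^sup>2 * k * k < 1" by linarith
  moreover have "16 * \<mu>\<^sup>2 * k * k \<le> 4 * c\<^sup>2 * \<mu>\<^sup>2 * k * k"
    using c k by (intro mult_right_mono) (auto intro!: power_mono[of 2 c 2, simplified])
  ultimately have "(8 * k\<^sup>2) * (2 * \<mu>\<^sup>2) < n * (2 * \<mu>\<^sup>2)"
    using welch by (simp add: algebra_simps power2_eq_square)
  then have "8 * k\<^sup>2 < n" using \<mu> by simp
  then have "k\<^sup>2 < n" using zero_le_power2[of k] by linarith
  then have "k < sqrt n" using real_less_rsqrt by blast
  then show ?thesis unfolding k_def by linarith
qed simp

lemma abs_supp_vec_entries_greater: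
  fixes \<beta> :: "real ^ 'p" and c1 c2 \<mu> B :: real
  assumes c1: "c1 > 2" and c2: "c2 > 2" and \<mu>: "\<mu> \<ge> 0" and B: "B \<ge> 0"
    and \<beta>: "beta_min \<beta> / norm \<beta> > 2 * c1 * \<mu> * sqrt (real (card (supp_vec \<beta>))) + 4 * c2 * B / norm \<beta>"
    and i: "i \<in> supp_vec \<beta>"
  shows "\<bar>\<beta> $ i\<bar> > 2 * \<mu> * (\<Sum>l\<in>UNIV. \<bar>\<beta> $ l\<bar>) + 2 * (2 * B)"
proof -
  define s where "s = sqrt (real (card (supp_vec \<beta>))) * norm \<beta>"
  have "norm \<beta> > 0" using i by (auto simp: supp_vec_def)
  then have "beta_min \<beta> / norm \<beta> * norm \<beta>
      > (2 * c1 * \<mu> * sqrt (real (card (supp_vec \<beta>))) + 4 * c2 * B / norm \<beta>) * norm \<beta>"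
    using \<beta> by (intro mult_strict_right_mono)
  then have "beta_min \<beta> > 2 * c1 * \<mu> * s + 4 * c2 * B"
    using \<open>norm \<beta> > 0\<close> by (simp add: s_def distrib_left distrib_right mult_ac)
  moreover have "\<mu> * (\<Sum>l\<in>UNIV. \<bar>\<beta> $ l\<bar>) \<le> \<mu> * s"
    unfolding s_def using \<mu> by (intro mult_left_mono sum_abs_le_sqrt_card_supp_vec_mult_norm)
  moreover have "\<mu> * s \<le> c1 * (\<mu> * s)"
    using \<mu> c1 by (intro mult_right_mono[of 1 c1, simplified]) (auto simp: s_def)
  moreover have "B \<le> c2 * B" using B c2 by (simp add: mult_le_cancel_right1)
  ultimately show ?thesis using beta_min_le_abs[OF i] by linarith
qed

lemma abs_inner_column_mult_vec_diff_le:
  fixes X :: "real ^ 'p ^ 'n"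
  assumes unit: "norm (column i X) = 1" and \<mu>: "coherence X \<ge> 0"
  shows "\<bar>column i X \<bullet> (X *v \<beta>) - \<beta> $ i\<bar> \<le> coherence X * (\<Sum>l\<in>UNIV. \<bar>\<beta> $ l\<bar>)"
proof -
  have "column i X \<bullet> (X *v \<beta>) - \<beta> $ i = (\<Sum>l\<in>UNIV - {i}. \<beta> $ l * (column i X \<bullet> column l X))"
    using unit by (simp add: inner_column_mult_vec sum.remove[of UNIV i] inner_column_self)
  also have "\<bar>\<dots>\<bar> \<le> (\<Sum>l\<in>UNIV - {i}. \<bar>\<beta> $ l\<bar> * coherence X)"
    by (rule order_trans[OF sum_abs sum_mono])
       (auto simp: abs_mult intro!: mult_left_mono abs_inner_columns_le_coherence)
  also have "\<dots> \<le> (\<Sum>l\<in>UNIV. \<bar>\<beta> $ l\<bar> * coherence X)"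
    by (rule sum_mono2) (use \<mu> in auto)
  finally show ?thesis by (simp add: sum_distrib_left mult.commute)
qed

lemma alg1_response_separates_support:
  fixes X :: "real ^ 'p ^ 'n" and e :: "real ^ 'n"
  assumes unit: "\<forall>i. norm (column i X) = 1"
    and noise: "\<forall>i. \<bar>column i X \<bullet> e\<bar> \<le> t"
    and dominant: "\<forall>i\<in>supp_vec \<beta>. \<bar>\<beta> $ i\<bar> > 2 * coherence X * (\<Sum>l\<in>UNIV. \<bar>\<beta> $ l\<bar>) + 2 * t"
    and i: "i \<in> supp_vec \<beta>" and j: "j \<notin> supp_vec \<beta>"
  shows "\<bar>(transpose X *v (X *v \<beta> + e)) $ j\<bar> < \<bar>(transpose X *v (X *v \<beta> + e)) $ i\<bar>"
proof -
  have "coherence X \<ge> 0"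
    using i j abs_inner_columns_le_coherence[of i j X] by fastforce
  then have dev: "\<bar>column l X \<bullet> (X *v \<beta>) - \<beta> $ l\<bar> \<le> coherence X * (\<Sum>l\<in>UNIV. \<bar>\<beta> $ l\<bar>)" for l
    using unit by (intro abs_inner_column_mult_vec_diff_le) auto
  have w: "(transpose X *v (X *v \<beta> + e)) $ l = column l X \<bullet> (X *v \<beta>) + column l X \<bullet> e" for l
    by (simp only: transpose_mult_vec_nth inner_add_right)
  have "\<beta> $ j = 0" using j by (simp add: supp_vec_def)
  then show ?thesis
    unfolding w using dev[of i] dev[of j] noise[rule_format, of i] noise[rule_format, of j]
      dominant[rule_format, OF i] by linarith
qed

lemma strictly_dominating_subset_of_dominating:
  fixes f :: "'a::finite \<Rightarrow> 'b::linorder"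
  assumes T: "\<forall>i\<in>T. \<forall>j. j \<notin> T \<longrightarrow> f j < f i"
    and S: "\<forall>i\<in>S. \<forall>j. j \<notin> S \<longrightarrow> f j \<le> f i"
    and card: "card T \<le> card S"
  shows "T \<subseteq> S"
proof (rule ccontr)
  assume "\<not> T \<subseteq> S"
  then obtain i where "i \<in> T" "i \<notin> S" by blast
  have "S \<subseteq> T - {i}"
  proof
    fix j assume "j \<in> S"
    then have "f i \<le> f j" using S \<open>i \<notin> S\<close> by blast
    then have "j \<in> T" using T \<open>i \<in> T\<close> by (meson leD)
    with \<open>j \<in> S\<close> \<open>i \<notin> S\<close> show "j \<in> T - {i}" by auto
  qed
  then have "card S \<le> card (T - {i})" by (intro card_mono) auto
  also have "\<dots> < card T" using \<open>i \<in> T\<close> by (intro card_Diff1_less) auto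
  finally have "card S < card T" .
  with card show False by simp
qed

lemma alg1_output_contains_supp_vec:
  fixes X :: "real ^ 'p ^ 'n" and e :: "real ^ 'n"
  assumes unit: "\<forall>i. norm (column i X) = 1"
    and noise: "\<forall>i. \<bar>column i X \<bullet> e\<bar> \<le> t"
    and dominant: "\<forall>i\<in>supp_vec \<beta>. \<bar>\<beta> $ i\<bar> > 2 * coherence X * (\<Sum>l\<in>UNIV. \<bar>\<beta> $ l\<bar>) + 2 * t"
    and d: "card (supp_vec \<beta>) \<le> d" and S: "alg1_output X (X *v \<beta> + e) d S"
  shows "supp_vec \<beta> \<subseteq> S"
  using S d alg1_response_separates_support[OF unit noise dominant]
  by (intro strictly_dominating_subset_of_dominating[where f="\<lambda>i. \<bar>(transpose X *v (X *v \<beta> + e)) $ i\<bar>"])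
     (auto simp: alg1_output_def Let_def)

lemma alg1_output_contains_supp_vec_if_noise_le:
  fixes X :: "real ^ 'p ^ 'n" and e :: "real ^ 'n" and c1 c2 B :: real
  assumes unit: "\<forall>i. norm (column i X) = 1" and \<mu>: "coherence X > 0"
    and p: "CARD('p) \<ge> 2 * CARD('n)" and c1: "c1 > 2" and c2: "c2 > 2" and B: "B \<ge> 0"
    and \<beta>: "beta_min \<beta> / norm \<beta> > 2 * c1 * coherence X * sqrt (real (card (supp_vec \<beta>)))
      + 4 * c2 * B / norm \<beta>"
    and noise: "\<forall>i. \<bar>column i X \<bullet> e\<bar> \<le> 2 * B"
    and d: "nat \<lceil>sqrt (real CARD('n))\<rceil> \<le> d" and S: "alg1_output X (X *v \<beta> + e) d S"
  shows "supp_vec \<beta> \<subseteq> S"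
proof -
  have "0 \<le> 4 * c2 * B / norm \<beta>" using c2 B by simp
  with \<beta> have "beta_min \<beta> / norm \<beta> > 2 * c1 * coherence X * sqrt (real (card (supp_vec \<beta>)))"
    by linarith
  then have "card (supp_vec \<beta>) \<le> d"
    using card_supp_vec_le_ceiling_sqrt[OF coherence_sq_ge[OF unit p] \<mu> c1] d le_trans by blast
  moreover have "\<forall>i\<in>supp_vec \<beta>. \<bar>\<beta> $ i\<bar> > 2 * coherence X * (\<Sum>l\<in>UNIV. \<bar>\<beta> $ l\<bar>) + 2 * (2 * B)"
    using abs_supp_vec_entries_greater[OF c1 c2 less_imp_le[OF \<mu>] B \<beta>] by blast
  ultimately show ?thesis using alg1_output_contains_supp_vec[OF unit noise _ _ S] by blast
qed

lemma sets_alg1_output_event: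
  fixes X :: "real ^ 'p ^ 'n" and y :: "'a \<Rightarrow> real ^ 'n"
  assumes "\<And>r. (\<lambda>\<omega>. y \<omega> $ r) \<in> borel_measurable M"
  shows "{\<omega> \<in> space M. \<forall>d S. P d \<and> alg1_output X (y \<omega>) d S \<longrightarrow> Q S} \<in> sets M"
proof -
  have [measurable]: "(\<lambda>\<omega>. y \<omega> $ r) \<in> borel_measurable M" for r by (rule assms)
  show ?thesis
    unfolding alg1_output_def Let_def transpose_mult_vec_nth inner_vec_def by measurable
qed

lemma (in prob_space) prob_all_abs_inner_columns_le:
  fixes X :: "real ^ 'p ^ 'n" and \<eta> :: "'a \<Rightarrow> real ^ 'n"
  assumes indep: "indep_vars (\<lambda>_. borel) (\<lambda>r \<omega>. \<eta> \<omega> $ r) UNIV"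
    and normal: "\<forall>r. distributed M lborel (\<lambda>\<omega>. \<eta> \<omega> $ r) (normal_density 0 \<sigma>)"
    and \<sigma>: "\<sigma> > 0" and unit: "\<forall>i. norm (column i X) = 1" and t: "t > 0"
  shows "measure M {\<omega> \<in> space M. \<forall>i. \<bar>column i X \<bullet> \<eta> \<omega>\<bar> \<le> t}
      \<ge> 1 - real CARD('p) * (2 * (\<sigma>\<^sup>2 * normal_density 0 \<sigma> t / t))"
proof -
  have Y: "distributed M lborel (\<lambda>\<omega>. column i X \<bullet> \<eta> \<omega>) (normal_density 0 \<sigma>)" for i
    using distributed_inner_indep_normal[OF indep normal \<sigma>] unit by blast
  have [measurable]: "(\<lambda>\<omega>. column i X \<bullet> \<eta> \<omega>) \<in> borel_measurable M" for i
    using distributed_measurable[OF Y] by simp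
  define F where "F i = {\<omega> \<in> space M. \<bar>column i X \<bullet> \<eta> \<omega>\<bar> > t}" for i
  have F_sets: "F i \<in> sets M" for i unfolding F_def by measurable
  have "measure M (\<Union>i. F i) \<le> (\<Sum>i\<in>UNIV. measure M (F i))"
    by (rule measure_UNION_le) (auto simp: F_sets)
  also have "\<dots> \<le> real CARD('p) * (2 * (\<sigma>\<^sup>2 * normal_density 0 \<sigma> t / t))"
    using prob_abs_normal_greater_le[OF Y \<sigma> t] by (intro sum_bounded_above) (simp add: F_def)
  moreover have "{\<omega> \<in> space M. \<forall>i. \<bar>column i X \<bullet> \<eta> \<omega>\<bar> \<le> t} = space M - (\<Union>i. F i)"
    by (auto simp: F_def not_less) (meson linorder_not_le)
  moreover have "(\<Union>i. F i) \<in> sets M" using F_sets by auto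
  ultimately show ?thesis by (simp add: prob_compl)
qed

lemma normal_tail_bound_at_twice_sqrt_log:
  fixes \<sigma> p :: real
  assumes \<sigma>: "\<sigma> > 0" and p: "p > 1"
  shows "2 * (\<sigma>\<^sup>2 * normal_density 0 \<sigma> (2 * sqrt (\<sigma>\<^sup>2 * ln p)) / (2 * sqrt (\<sigma>\<^sup>2 * ln p)))
       = 1 / (p\<^sup>2 * sqrt (2 * pi * ln p))"
proof -
  define L where "L = ln p"
  have L: "L > 0" using p by (simp add: L_def)
  have t: "2 * sqrt (\<sigma>\<^sup>2 * L) = 2 * \<sigma> * sqrt L"
    using \<sigma> by (simp add: real_sqrt_mult)
  have "exp (- (2 * \<sigma> * sqrt L - 0)\<^sup>2 / (2 * \<sigma>\<^sup>2)) = inverse (exp (L + L))"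
    using \<sigma> L by (simp add: power_mult_distrib exp_minus)
  also have "\<dots> = 1 / p\<^sup>2"
    using p unfolding L_def exp_add by (simp add: power2_eq_square inverse_eq_divide)
  finally have density: "normal_density 0 \<sigma> (2 * \<sigma> * sqrt L) = 1 / (sqrt (2 * pi) * \<sigma> * p\<^sup>2)"
    using \<sigma> by (simp add: normal_density_def real_sqrt_mult)
  show ?thesis
    unfolding L_def[symmetric] t density using \<sigma> L p by (simp add: real_sqrt_mult field_simps power2_eq_square)
qed

lemma (in prob_space) prob_all_abs_inner_columns_le_twice_sqrt_log:
  fixes X :: "real ^ 'p ^ 'n" and \<eta> :: "'a \<Rightarrow> real ^ 'n"
  assumes indep: "indep_vars (\<lambda>_. borel) (\<lambda>r \<omega>. \<eta> \<omega> $ r) UNIV"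
    and normal: "\<forall>r. distributed M lborel (\<lambda>\<omega>. \<eta> \<omega> $ r) (normal_density 0 \<sigma>)"
    and \<sigma>: "\<sigma> > 0" and unit: "\<forall>i. norm (column i X) = 1" and p: "CARD('p) > 1"
  shows "measure M {\<omega> \<in> space M. \<forall>i. \<bar>column i X \<bullet> \<eta> \<omega>\<bar> \<le> 2 * sqrt (\<sigma>\<^sup>2 * ln (real CARD('p)))}
      \<ge> 1 - 1 / (real CARD('p) * sqrt (2 * pi * ln (real CARD('p))))"
proof -
  let ?p = "real CARD('p)"
  define t where "t = 2 * sqrt (\<sigma>\<^sup>2 * ln ?p)"
  from p have p: "?p > 1" by simp
  then have "t > 0" using \<sigma> by (simp add: t_def)
  then have "measure M {\<omega> \<in> space M. \<forall>i. \<bar>column i X \<bullet> \<eta> \<omega>\<bar> \<le> t}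
      \<ge> 1 - ?p * (2 * (\<sigma>\<^sup>2 * normal_density 0 \<sigma> t / t))"
    by (rule prob_all_abs_inner_columns_le[OF indep normal \<sigma> unit])
  also have "?p * (2 * (\<sigma>\<^sup>2 * normal_density 0 \<sigma> t / t)) = 1 / (?p * sqrt (2 * pi * ln ?p))"
    unfolding t_def normal_tail_bound_at_twice_sqrt_log[OF \<sigma> p] using p
    by (simp add: power2_eq_square)
  finally show ?thesis unfolding t_def .
qed

theorem corollary2:
  fixes M :: "'a measure"
    and X :: "real ^ 'p ^ 'n"
    and \<beta> :: "real ^ 'p"
    and \<eta> :: "'a \<Rightarrow> real ^ 'n"
    and k :: nat and \<sigma> c1 c2 :: real
  assumes "prob_space M"
    and unit_cols: "\<forall>i. norm (column i X) = 1"
    and mu_pos: "coherence X > 0"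
    and k_supp: "card (supp_vec \<beta>) = k"
    and k_lt_n: "k < CARD('n)"
    and sigma_pos: "\<sigma> > 0"
    and noise_indep: "prob_space.indep_vars M (\<lambda>_. borel) (\<lambda>r \<omega>. \<eta> \<omega> $ r) UNIV"
    and noise_gauss: "\<forall>r. distributed M lborel (\<lambda>\<omega>. \<eta> \<omega> $ r) (normal_density 0 \<sigma>)"
    and p_ge: "CARD('p) \<ge> 2 * CARD('n)"
    and k_lt_mu: "real k < 1 / coherence X"
    and c1: "c1 > 2" and c2: "c2 > 2"
    and beta_cond: "beta_min \<beta> / norm \<beta> >
        2 * c1 * coherence X * sqrt (real k)
        + 4 * c2 * sqrt (\<sigma>\<^sup>2 * ln (real CARD('p))) / norm \<beta>"
  shows "measure M {\<omega> \<in> space M.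
            \<forall>d::nat. \<forall>S :: 'p set.
              nat \<lceil>sqrt (real CARD('n))\<rceil> \<le> d \<and> d \<le> CARD('p) \<and>
              alg1_output X (X *v \<beta> + \<eta> \<omega>) d S \<longrightarrow> supp_vec \<beta> \<subseteq> S}
         > 1 - 2 / (real CARD('p) * sqrt (2 * pi * ln (real CARD('p))))"
proof -
  interpret prob_space M by fact
  let ?p = "real CARD('p)"
  let ?small_noise = "{\<omega> \<in> space M. \<forall>i. \<bar>column i X \<bullet> \<eta> \<omega>\<bar> \<le> 2 * sqrt (\<sigma>\<^sup>2 * ln ?p)}"
  let ?recovered = "{\<omega> \<in> space M. \<forall>d::nat. \<forall>S :: 'p set.
    nat \<lceil>sqrt (real CARD('n))\<rceil> \<le> d \<and> d \<le> CARD('p) \<and>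
    alg1_output X (X *v \<beta> + \<eta> \<omega>) d S \<longrightarrow> supp_vec \<beta> \<subseteq> S}"
  have "CARD('n) > 0" by (rule finite_UNIV_card_ge_0) simp
  with p_ge have p: "CARD('p) > 1" by linarith
  then have "0 \<le> sqrt (\<sigma>\<^sup>2 * ln ?p)" by simp
  then have "?small_noise \<subseteq> ?recovered"
    using alg1_output_contains_supp_vec_if_noise_le[OF unit_cols mu_pos p_ge c1 c2 _ beta_cond[folded k_supp]]
    by auto
  moreover have "?recovered \<in> sets M"
    using distributed_measurable[OF noise_gauss[rule_format]] unfolding conj_assoc[symmetric]
    by (intro sets_alg1_output_event) simp
  ultimately have "measure M ?small_noise \<le> measure M ?recovered"
    by (rule finite_measure_mono)
  moreover have "measure M ?small_noise \<ge> 1 - 1 / (?p * sqrt (2 * pi * ln ?p))"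
    by (rule prob_all_abs_inner_columns_le_twice_sqrt_log[OF noise_indep noise_gauss sigma_pos unit_cols p])
  moreover have "1 / (?p * sqrt (2 * pi * ln ?p)) < 2 / (?p * sqrt (2 * pi * ln ?p))"
    using p by (intro divide_strict_right_mono) auto
  ultimately show ?thesis by linarith
qed

end
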